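(* Let $L\in\mathbb{R}^{m\times m}$ satisfy $\|\mathrm{e}^{\omega L}\|_\infty\le1$ for all $\omega>0$, and let $f$ satisfy: there exist $\rho>0$ and $\omega_0^+>0$ such that $|\xi+\omega f(\xi)|\le\rho$ for all $\xi\in[-\rho,\rho]$, $\omega\in(0,\omega_0^+]$. Consider the scheme $$u^{(1)}=\mathrm{e}^{\frac{2\tau}{3}L}u^n+\tfrac{2\tau}{3}\mathrm{e}^{\frac{2\tau}{3}L}f(u^n),$$ $$u^{(2)}=\mathrm{e}^{\frac{2\tau}{3}L}u^n+\tfrac{2\tau}{3}\Big(\tfrac13\mathrm{e}^{\frac{2\tau}{3}L}f(u^n)+\tfrac23 f(u^{(1)})\Big),$$ $$u^{n+1}=\mathrm{e}^{\tau L}u^n+\tau\Big(\tfrac{4}{16}\mathrm{e}^{\tau L}f(u^n)+\tfrac{3}{16}\mathrm{e}^{\frac{\tau}{3}L}f(u^{(1)})+\tfrac{9}{16}\mathrm{e}^{\frac{\tau}{3}L}f(u^{(2)})\Big).$$ If $\|u^n\|_\infty\le\rho$ and $0<\tau\le\frac34\omega_0^+$, then $\|u^{n+1}\|_\infty\le\rho$.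
   Context: $\|\cdot\|_\infty$ is the vector $\infty$-norm and induced matrix norm; $f(u)$ for a vector $u$ is applied componentwise. *)

theory Defs
  imports "HOL-Analysis.Analysis"
begin

definition mat_pow :: "real^'n^'n \<Rightarrow> nat \<Rightarrow> real^'n^'n" where
  "mat_pow A k = (((**) A) ^^ k) (mat 1)"

definition mat_exp :: "real^'n^'n \<Rightarrow> real^'n^'n" where
  "mat_exp A = (\<Sum>k. (1 / fact k) *\<^sub>R mat_pow A k)"

definition vnorm_inf :: "real^'n \<Rightarrow> real" where
  "vnorm_inf x = (MAX i \<in> UNIV. \<bar>x $ i\<bar>)"

definition mnorm_inf :: "real^'n^'n \<Rightarrow> real" where
  "mnorm_inf A = Sup {vnorm_inf (A *v x) | x. vnorm_inf x \<le> 1}"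

definition fvec :: "(real \<Rightarrow> real) \<Rightarrow> real^'n \<Rightarrow> real^'n" where
  "fvec f u = (\<chi> i. f (u $ i))"

end

theory Submission
  imports Defs
begin

text \<open>The forward Euler condition on \<open>f\<close> and the contractivity of \<open>exp(\<omega> L)\<close> each
  preserve the \<open>\<infinity>\<close>-norm ball of radius \<open>\<rho>\<close>, and so does every convex combination.
  In Shu--Osher form every stage of the scheme is a convex combination of vectors
  \<open>exp(s L) (v + \<omega> f(v))\<close> with \<open>v\<close> in the ball and \<open>\<omega> \<le> 4\<tau>/3 \<le> \<omega>0\<close>. The only
  analytic input is the semigroup law \<open>exp(\<tau>/3 L) exp(2\<tau>/3 L) = exp(\<tau> L)\<close>, obtained
  from the power series by a Cauchy product.\<close>

lemma sums_vec_iff: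
  fixes f :: "nat \<Rightarrow> 'a::{real_normed_vector}^'n"
  shows "f sums s \<longleftrightarrow> (\<forall>i. (\<lambda>k. f k $ i) sums (s $ i))"
  unfolding sums_def
  by (auto intro: vec_tendstoI dest: tendsto_vec_nth[where i = i for i])

text \<open>Matrices carry no \<open>real_normed_algebra\<close> structure, so the Cauchy product is taken
  entrywise, where the scalar version applies.\<close>

lemma matrix_mult_Cauchy_product_sums:
  fixes A :: "nat \<Rightarrow> real^'n^'m" and B :: "nat \<Rightarrow> real^'p^'n"
  assumes "A sums SA" and "B sums SB"
    and "\<And>i j. summable (\<lambda>k. \<bar>A k $ i $ j\<bar>)" and "\<And>i j. summable (\<lambda>k. \<bar>B k $ i $ j\<bar>)"
  shows "(\<lambda>k. \<Sum>p\<le>k. A p ** B (k - p)) sums (SA ** SB)"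
proof -
  have entries: "(\<Sum>k. A k $ i $ l) = SA $ i $ l" "(\<Sum>k. B k $ l $ j) = SB $ l $ j" for i l j
    using assms(1,2) by (simp_all add: sums_vec_iff sums_iff)
  have "(\<lambda>k. \<Sum>l\<in>UNIV. \<Sum>p\<le>k. A p $ i $ l * B (k - p) $ l $ j)
          sums (\<Sum>l\<in>UNIV. (\<Sum>k. A k $ i $ l) * (\<Sum>k. B k $ l $ j))" for i j
    using assms(3,4) by (intro sums_sum Cauchy_product_sums) simp_all
  then show ?thesis
    unfolding sums_vec_iff entries
    by (simp add: matrix_matrix_mult_def sum_distrib_left sum_distrib_right sum.swap[of _ "{.._}"])
qed

lemma mat_pow_0 [simp]: "mat_pow A 0 = mat 1"
  by (simp add: mat_pow_def)

lemma mat_pow_Suc: "mat_pow A (Suc k) = A ** mat_pow A k"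
  by (simp add: mat_pow_def)

lemma mat_pow_add: "mat_pow (A :: real^'n^'n) (i + j) = mat_pow A i ** mat_pow A j"
  by (induction i) (simp_all add: mat_pow_Suc matrix_mul_assoc)

lemma mat_pow_scaleR: "mat_pow (c *\<^sub>R A) k = (c ^ k) *\<^sub>R mat_pow A k"
  by (induction k) (simp_all add: mat_pow_Suc matrix_scalar_ac scalar_matrix_assoc[symmetric])

lemma onorm_matrix_mult_le:
  fixes A :: "real^'n^'m" and B :: "real^'p^'n"
  shows "onorm ((*v) (A ** B)) \<le> onorm ((*v) A) * onorm ((*v) B)"
proof -
  have "(*v) (A ** B) = (*v) A \<circ> (*v) B"
    by (simp add: fun_eq_iff matrix_vector_mul_assoc)
  then show ?thesis
    using onorm_compose[OF matrix_vector_mul_bounded_linear matrix_vector_mul_bounded_linear, of A B]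
    by simp
qed

lemma onorm_mat_pow_le: "onorm ((*v) (mat_pow (A :: real^'n^'n) k)) \<le> onorm ((*v) A) ^ k"
proof (induction k)
  case 0
  show ?case using onorm_id_le by (simp add: matrix_vector_mul_lid)
next
  case (Suc k)
  have "onorm ((*v) (mat_pow A (Suc k))) \<le> onorm ((*v) A) * onorm ((*v) (mat_pow A k))"
    unfolding mat_pow_Suc by (rule onorm_matrix_mult_le)
  also have "\<dots> \<le> onorm ((*v) A) * onorm ((*v) A) ^ k"
    using Suc.IH by (intro mult_left_mono onorm_pos_le matrix_vector_mul_bounded_linear)
  finally show ?case by simp
qed

definition mat_exp_series :: "real^'n^'n \<Rightarrow> nat \<Rightarrow> real^'n^'n" where
  "mat_exp_series A k = (1 / fact k) *\<^sub>R mat_pow A k"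

lemma summable_mat_exp_series_entry: "summable (\<lambda>k. \<bar>mat_exp_series A k $ i $ j\<bar>)"
proof (rule summable_comparison_test)
  let ?r = "onorm ((*v) A)"
  have "\<bar>mat_exp_series A k $ i $ j\<bar> \<le> ?r ^ k / fact k" for k
  proof -
    have "\<bar>mat_pow A k $ i $ j\<bar> \<le> ?r ^ k"
      using matrix_component_le_onorm onorm_mat_pow_le by (rule order_trans)
    then show ?thesis
      by (simp add: mat_exp_series_def divide_right_mono)
  qed
  then show "\<exists>N. \<forall>k\<ge>N. norm \<bar>mat_exp_series A k $ i $ j\<bar> \<le> ?r ^ k / fact k"
    by simp
  show "summable (\<lambda>k. ?r ^ k / fact k)"
    using summable_exp[of ?r] by (simp add: divide_inverse mult.commute)
qed

lemma mat_exp_series_sums: "mat_exp_series A sums mat_exp A"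
proof -
  let ?S = "\<chi> i j. \<Sum>k. mat_exp_series A k $ i $ j"
  have "(\<lambda>k. mat_exp_series A k $ i $ j) sums (?S $ i $ j)" for i j
    using summable_sums[OF summable_rabs_cancel[OF summable_mat_exp_series_entry]] by simp
  then have "mat_exp_series A sums ?S"
    by (simp add: sums_vec_iff)
  then show ?thesis
    unfolding mat_exp_def mat_exp_series_def[symmetric] by (simp add: sums_iff)
qed

lemma mat_exp_series_convolution:
  "(\<Sum>p\<le>k. mat_exp_series (a *\<^sub>R L) p ** mat_exp_series (b *\<^sub>R L) (k - p))
     = mat_exp_series ((a + b) *\<^sub>R L) k"
proof -
  have "(\<Sum>p\<le>k. mat_exp_series (a *\<^sub>R L) p ** mat_exp_series (b *\<^sub>R L) (k - p))
      = (\<Sum>p\<le>k. (of_nat (k choose p) * a ^ p * b ^ (k - p) / fact k) *\<^sub>R mat_pow L k)"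
  proof (rule sum.cong[OF refl])
    fix p assume "p \<in> {..k}"
    then have "p \<le> k" by simp
    then have "mat_pow L p ** mat_pow L (k - p) = mat_pow L k"
      by (simp flip: mat_pow_add)
    with \<open>p \<le> k\<close> show "mat_exp_series (a *\<^sub>R L) p ** mat_exp_series (b *\<^sub>R L) (k - p)
        = (of_nat (k choose p) * a ^ p * b ^ (k - p) / fact k) *\<^sub>R mat_pow L k"
      by (simp add: mat_exp_series_def mat_pow_scaleR matrix_scalar_ac binomial_fact mult.commute
          flip: scalar_matrix_assoc)
  qed
  also have "\<dots> = ((\<Sum>p\<le>k. of_nat (k choose p) * a ^ p * b ^ (k - p)) / fact k) *\<^sub>R mat_pow L k"
    by (simp add: scaleR_sum_left sum_divide_distrib)
  also have "\<dots> = mat_exp_series ((a + b) *\<^sub>R L) k"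
    by (simp add: mat_exp_series_def mat_pow_scaleR binomial_ring)
  finally show ?thesis .
qed

lemma mat_exp_add:
  "mat_exp (a *\<^sub>R L) ** mat_exp (b *\<^sub>R L) = mat_exp ((a + b) *\<^sub>R L)"
proof -
  have "mat_exp_series ((a + b) *\<^sub>R L) sums (mat_exp (a *\<^sub>R L) ** mat_exp (b *\<^sub>R L))"
    using matrix_mult_Cauchy_product_sums[OF mat_exp_series_sums[of "a *\<^sub>R L"]
        mat_exp_series_sums[of "b *\<^sub>R L"] summable_mat_exp_series_entry summable_mat_exp_series_entry]
    by (simp add: mat_exp_series_convolution)
  then show ?thesis
    using mat_exp_series_sums sums_unique2 by blast
qed

lemma vnorm_inf_le_iff: "vnorm_inf x \<le> r \<longleftrightarrow> (\<forall>i. \<bar>x $ i\<bar> \<le> r)"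
  unfolding vnorm_inf_def by (subst Max_le_iff) auto

lemma abs_le_vnorm_inf: "\<bar>x $ i\<bar> \<le> vnorm_inf x"
  unfolding vnorm_inf_def by (rule Max_ge) auto

lemma vnorm_inf_nonneg: "0 \<le> vnorm_inf x"
  using abs_le_vnorm_inf abs_ge_zero order_trans by blast

lemma vnorm_inf_matrix_vector_le_abs_sum:
  "vnorm_inf (A *v x) \<le> (\<Sum>i\<in>UNIV. \<Sum>j\<in>UNIV. \<bar>A $ i $ j\<bar>) * vnorm_inf x"
  unfolding vnorm_inf_le_iff
proof
  fix i
  have "\<bar>(A *v x) $ i\<bar> \<le> (\<Sum>j\<in>UNIV. \<bar>A $ i $ j * x $ j\<bar>)"
    unfolding matrix_vector_mult_def by (simp only: vec_lambda_beta sum_abs)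
  also have "\<dots> \<le> (\<Sum>j\<in>UNIV. \<bar>A $ i $ j\<bar> * vnorm_inf x)"
    unfolding abs_mult by (intro sum_mono mult_left_mono abs_le_vnorm_inf abs_ge_zero)
  also have "\<dots> \<le> (\<Sum>i\<in>UNIV. \<Sum>j\<in>UNIV. \<bar>A $ i $ j\<bar>) * vnorm_inf x"
    unfolding sum_distrib_right[symmetric]
    by (intro mult_right_mono vnorm_inf_nonneg
        member_le_sum[where f = "\<lambda>i. \<Sum>j\<in>UNIV. \<bar>A $ i $ j\<bar>"] sum_nonneg) auto
  finally show "\<bar>(A *v x) $ i\<bar> \<le> (\<Sum>i\<in>UNIV. \<Sum>j\<in>UNIV. \<bar>A $ i $ j\<bar>) * vnorm_inf x" .
qed

lemma bdd_above_mnorm_inf_set: "bdd_above {vnorm_inf (A *v y) | y. vnorm_inf y \<le> 1}"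
proof (rule bdd_aboveI)
  let ?B = "\<Sum>i\<in>UNIV. \<Sum>j\<in>UNIV. \<bar>A $ i $ j\<bar>"
  fix s assume "s \<in> {vnorm_inf (A *v y) | y. vnorm_inf y \<le> 1}"
  then obtain y where "s = vnorm_inf (A *v y)" and "vnorm_inf y \<le> 1" by blast
  moreover have "0 \<le> ?B" by (intro sum_nonneg) simp
  ultimately show "s \<le> ?B"
    using vnorm_inf_matrix_vector_le_abs_sum[of A y] mult_left_le order_trans by blast
qed

lemma vnorm_inf_matrix_vector_le: "vnorm_inf (A *v x) \<le> mnorm_inf A * vnorm_inf x"
proof (cases "vnorm_inf x = 0")
  case True
  then show ?thesis
    using vnorm_inf_matrix_vector_le_abs_sum[of A x] by simp
next
  case False
  let ?r = "vnorm_inf x"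
  have r: "?r > 0"
    using False vnorm_inf_nonneg[of x] by linarith
  have "vnorm_inf ((1 / ?r) *\<^sub>R x) \<le> 1"
    unfolding vnorm_inf_le_iff using r abs_le_vnorm_inf[of x] by (simp add: divide_le_eq_1)
  then have "vnorm_inf (A *v ((1 / ?r) *\<^sub>R x)) \<le> mnorm_inf A"
    unfolding mnorm_inf_def by (intro cSup_upper bdd_above_mnorm_inf_set) blast
  then have "\<bar>(A *v x) $ i\<bar> / ?r \<le> mnorm_inf A" for i
    using abs_le_vnorm_inf[of "A *v ((1 / ?r) *\<^sub>R x)" i] r
    by (simp add: matrix_vector_mult_scaleR)
  then show ?thesis
    using r by (simp add: vnorm_inf_le_iff pos_divide_le_eq mult.commute)
qed

lemma vnorm_inf_contraction:
  assumes "mnorm_inf A \<le> 1"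
  shows "vnorm_inf (A *v x) \<le> vnorm_inf x"
proof -
  have "vnorm_inf (A *v x) \<le> mnorm_inf A * vnorm_inf x"
    by (rule vnorm_inf_matrix_vector_le)
  also have "\<dots> \<le> vnorm_inf x"
    using mult_right_mono[OF assms vnorm_inf_nonneg] by simp
  finally show ?thesis .
qed

lemma vnorm_inf_convex_combination_le:
  assumes "vnorm_inf x \<le> \<rho>" "vnorm_inf y \<le> \<rho>" "0 \<le> a" "0 \<le> b" "a + b = 1"
  shows "vnorm_inf (a *\<^sub>R x + b *\<^sub>R y) \<le> \<rho>"
  unfolding vnorm_inf_le_iff
proof
  fix i
  have "\<bar>a * x $ i + b * y $ i\<bar> \<le> a * \<bar>x $ i\<bar> + b * \<bar>y $ i\<bar>"
    using abs_triangle_ineq[of "a * x $ i" "b * y $ i"] assms(3,4) by (simp add: abs_mult)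
  also have "\<dots> \<le> a * \<rho> + b * \<rho>"
    using assms by (intro add_mono mult_left_mono) (auto simp: vnorm_inf_le_iff)
  also have "\<dots> = \<rho>"
    by (simp add: assms(5) flip: distrib_right)
  finally show "\<bar>(a *\<^sub>R x + b *\<^sub>R y) $ i\<bar> \<le> \<rho>" by simp
qed

lemma vnorm_inf_forward_euler_le:
  assumes f: "\<And>\<xi> \<omega>. \<xi> \<in> {-\<rho>..\<rho>} \<Longrightarrow> \<omega> \<in> {0<..\<omega>0} \<Longrightarrow> \<bar>\<xi> + \<omega> * f \<xi>\<bar> \<le> \<rho>"
    and "vnorm_inf w \<le> \<rho>" and "\<omega> \<in> {0<..\<omega>0}"
  shows "vnorm_inf (w + \<omega> *\<^sub>R fvec f w) \<le> \<rho>"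
  unfolding vnorm_inf_le_iff
proof
  fix i
  have "\<bar>w $ i\<bar> \<le> \<rho>"
    using assms(2) vnorm_inf_le_iff by blast
  then have "w $ i \<in> {-\<rho>..\<rho>}"
    by (simp add: abs_le_iff)
  then show "\<bar>(w + \<omega> *\<^sub>R fvec f w) $ i\<bar> \<le> \<rho>"
    using f assms(3) by (simp add: fvec_def)
qed

lemma exponential_rk3_Shu_Osher_form:
  fixes E1 E2 E3 :: "real^'n^'n" and g :: "real^'n \<Rightarrow> real^'n"
  assumes E: "E3 ** E2 = E1"
    and u1: "u1 = E2 *v un + (2*\<tau>/3) *\<^sub>R (E2 *v g un)"
    and u2: "u2 = E2 *v un + (2*\<tau>/3) *\<^sub>R ((1/3) *\<^sub>R (E2 *v g un) + (2/3) *\<^sub>R g u1)"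
    and un1: "un1 = E1 *v un + \<tau> *\<^sub>R ((4/16) *\<^sub>R (E1 *v g un)
                        + (3/16) *\<^sub>R (E3 *v g u1) + (9/16) *\<^sub>R (E3 *v g u2))"
  shows "u1 = E2 *v (un + (2*\<tau>/3) *\<^sub>R g un)"
    and "u2 = (2/3) *\<^sub>R (E2 *v un) + (1/3) *\<^sub>R (u1 + (4*\<tau>/3) *\<^sub>R g u1)"
    and "un1 = (27/64) *\<^sub>R (E3 *v (u2 + (4*\<tau>/3) *\<^sub>R g u2))
             + (37/64) *\<^sub>R (E1 *v (un + (10*\<tau>/37) *\<^sub>R g un))"
proof -
  show "u1 = E2 *v (un + (2*\<tau>/3) *\<^sub>R g un)"
    by (simp add: u1 matrix_vector_right_distrib matrix_vector_mult_scaleR)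
  show "u2 = (2/3) *\<^sub>R (E2 *v un) + (1/3) *\<^sub>R (u1 + (4*\<tau>/3) *\<^sub>R g u1)"
    unfolding u2 by (subst (2) u1) (simp add: vec_eq_iff algebra_simps)
  have "E3 *v u2 = E1 *v un + (2*\<tau>/3) *\<^sub>R ((1/3) *\<^sub>R (E1 *v g un) + (2/3) *\<^sub>R (E3 *v g u1))"
    unfolding u2 E[symmetric]
    by (simp add: matrix_vector_right_distrib matrix_vector_mult_scaleR matrix_vector_mul_assoc)
  then show "un1 = (27/64) *\<^sub>R (E3 *v (u2 + (4*\<tau>/3) *\<^sub>R g u2))
             + (37/64) *\<^sub>R (E1 *v (un + (10*\<tau>/37) *\<^sub>R g un))"
    unfolding un1
    by (simp add: matrix_vector_right_distrib matrix_vector_mult_scaleR vec_eq_iff algebra_simps)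
qed

theorem mainTheorem5:
  fixes L :: "real^'m^'m" and f :: "real \<Rightarrow> real"
    and \<rho> \<omega>0 \<tau> :: real and un u1 u2 un1 :: "real^'m"
  assumes hL: "\<And>\<omega>. \<omega> > 0 \<Longrightarrow> mnorm_inf (mat_exp (\<omega> *\<^sub>R L)) \<le> 1"
    and h\<rho>: "\<rho> > 0" and h\<omega>0: "\<omega>0 > 0"
    and hf: "\<And>\<xi> \<omega>. \<xi> \<in> {-\<rho>..\<rho>} \<Longrightarrow> \<omega> \<in> {0<..\<omega>0} \<Longrightarrow> \<bar>\<xi> + \<omega> * f \<xi>\<bar> \<le> \<rho>"
    and h1: "u1 = mat_exp ((2*\<tau>/3) *\<^sub>R L) *v un
               + (2*\<tau>/3) *\<^sub>R (mat_exp ((2*\<tau>/3) *\<^sub>R L) *v fvec f un)"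
    and h2: "u2 = mat_exp ((2*\<tau>/3) *\<^sub>R L) *v un
               + (2*\<tau>/3) *\<^sub>R ((1/3) *\<^sub>R (mat_exp ((2*\<tau>/3) *\<^sub>R L) *v fvec f un)
                                 + (2/3) *\<^sub>R fvec f u1)"
    and h3: "un1 = mat_exp (\<tau> *\<^sub>R L) *v un
               + \<tau> *\<^sub>R ((4/16) *\<^sub>R (mat_exp (\<tau> *\<^sub>R L) *v fvec f un)
                        + (3/16) *\<^sub>R (mat_exp ((\<tau>/3) *\<^sub>R L) *v fvec f u1)
                        + (9/16) *\<^sub>R (mat_exp ((\<tau>/3) *\<^sub>R L) *v fvec f u2))"
    and hun: "vnorm_inf un \<le> \<rho>"
    and h\<tau>: "0 < \<tau>" "\<tau> \<le> 3/4 * \<omega>0"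
  shows "vnorm_inf un1 \<le> \<rho>"
proof -
  have contraction: "vnorm_inf (mat_exp (s *\<^sub>R L) *v x) \<le> vnorm_inf x" if "0 < s" for s x
    using hL[OF that] by (rule vnorm_inf_contraction)
  have euler: "vnorm_inf (w + \<omega> *\<^sub>R fvec f w) \<le> \<rho>"
    if "vnorm_inf w \<le> \<rho>" "\<omega> \<in> {0<..\<omega>0}" for w \<omega>
    using hf that by (rule vnorm_inf_forward_euler_le)
  have "mat_exp ((\<tau>/3) *\<^sub>R L) ** mat_exp ((2*\<tau>/3) *\<^sub>R L) = mat_exp (\<tau> *\<^sub>R L)"
    using mat_exp_add[of "\<tau>/3" L "2*\<tau>/3"] by simp
  note stages = exponential_rk3_Shu_Osher_form[OF this h1 h2 h3]
  have "vnorm_inf u1 \<le> \<rho>"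
    unfolding stages(1) using h\<tau> by (intro order_trans[OF contraction euler] hun) auto
  then have "vnorm_inf u2 \<le> \<rho>"
    unfolding stages(2) using h\<tau> hun
    by (intro vnorm_inf_convex_combination_le order_trans[OF contraction] euler) auto
  then show ?thesis
    unfolding stages(3) using h\<tau> hun
    by (intro vnorm_inf_convex_combination_le order_trans[OF contraction] euler) auto
qed

end
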